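(* Let $k>0$, $N\in\mathbb{N}^+$, $h=\frac{1}{N+1}$, and let $\mathcal{A}_h$ be the $(N+1)\times(N+1)$ matrix defined below acting on $\mathbb{Y}_h=\mathbb{C}^{N+1}$ with the inner product $\langle\cdot,\cdot\rangle_{\mathbb{Y}_h}$ defined below. Then for every $Y_h=(y_1,\dots,y_{N+1})^\top\in\mathbb{Y}_h$, $$\mathrm{Re}\,\langle\mathcal{A}_hY_h,Y_h\rangle_{\mathbb{Y}_h}=-k|y_{N+1}|^2,$$ so $\mathcal{A}_h$ is dissipative on $\mathbb{Y}_h$ for every such $h\in(0,1)$.
   Context: Let $D_h$ be the $(N+1)\times(N+1)$ lower bidiagonal matrix $D_h=\frac12(\text{ones on the diagonal and on the first subdiagonal})$, i.e. $(D_hY)_j=\frac{y_{j-1}+y_j}{2}$ with the convention $y_0=0$; and let $M_h=\frac1h(\text{$-1$ on the diagonal, $1$ on the first superdiagonal})$, an $(N+1)\times(N+1)$ upper bidiagonal matrix. Both are invertible. Let $e_{N+1}=(0,\dots,0,1)^\top$. For $Y_h=(y_1,\dots,y_{N+1})^\top\in\mathbb{C}^{N+1}$ let $Z_h=(z_0,\dots,z_N)^\top$ (the "shadow element" of $Y_h$) be the unique solution of $D_h^\top Z_h=-M_h^\top Y_h+\tfrac{ik}{2}y_{N+1}e_{N+1}$, and define $$\mathcal{A}_hY_h=D_h^{-1}\Big[-iM_hZ_h-\tfrac{k}{h}y_{N+1}e_{N+1}\Big]=D_h^{-1}\Big[iM_h(D_h^\top)^{-1}\big(M_h^\top Y_h-\tfrac{ik}{2}y_{N+1}e_{N+1}\big)-\tfrac{k}{h}y_{N+1}e_{N+1}\Big].$$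 Equivalently, with $y_0:=0$, $z_{N+1}:=-iky_{N+1}$, $u_{j+\frac12}=\frac{u_j+u_{j+1}}2$, $\delta_xu_{j+\frac12}=\frac{u_{j+1}-u_j}{h}$, one has $z_{j+\frac12}=\delta_xy_{j+\frac12}$ for $0\le j\le N$, and $\widetilde Y_h=\mathcal{A}_hY_h$ is characterized by $\widetilde y_{j+\frac12}=-i\delta_xz_{j+\frac12}$ for $0\le j\le N$ (with $\widetilde y_0=0$). This is the order-reduction semi-discretization of $w_t=-iw_{xx}$, $w(0,t)=0$, $w_x(1,t)=-ikw(1,t)$. The inner product on $\mathbb{Y}_h=\mathbb{C}^{N+1}$ is $\langle Y_h,\widetilde Y_h\rangle_{\mathbb{Y}_h}=h\langle D_hY_h,D_h\widetilde Y_h\rangle$, where $\langle\cdot,\cdot\rangle$ is the standard inner product of $\mathbb{C}^{N+1}$. *)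

theory Defs
  imports "Jordan_Normal_Form.Matrix"
begin

(* Vectors/matrices of dimension N+1, 0-based indices: entry j of Y_h is y_{j+1},
   entry j of Z_h is z_j. *)

definition hstep :: "nat \<Rightarrow> real" where
  "hstep N = 1 / (real N + 1)"

definition Dh :: "nat \<Rightarrow> complex mat" where
  "Dh N = mat (N+1) (N+1) (\<lambda>(i,j). if i = j \<or> i = j + 1 then 1/2 else 0)"

definition Mh :: "nat \<Rightarrow> complex mat" where
  "Mh N = mat (N+1) (N+1) (\<lambda>(i,j). if i = j then - complex_of_real (1 / hstep N)
                                   else if j = i + 1 then complex_of_real (1 / hstep N) else 0)"

definition eN :: "nat \<Rightarrow> complex vec" where
  "eN N = vec (N+1) (\<lambda>i. if i = N then 1 else 0)"

definition shadow :: "real \<Rightarrow> nat \<Rightarrow> complex vec \<Rightarrow> complex vec" where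
  "shadow k N Y = (THE Z. Z \<in> carrier_vec (N+1) \<and>
      transpose_mat (Dh N) *\<^sub>v Z =
        - (transpose_mat (Mh N) *\<^sub>v Y)
        + ((\<i> * complex_of_real k / 2) * (Y $ N)) \<cdot>\<^sub>v eN N)"

(* A_h Y = D_h^{-1} [ -i M_h Z_h - (k/h) y_{N+1} e_{N+1} ], i.e. the unique X with D_h X = ... *)
definition Ah :: "real \<Rightarrow> nat \<Rightarrow> complex vec \<Rightarrow> complex vec" where
  "Ah k N Y = (THE X. X \<in> carrier_vec (N+1) \<and>
      Dh N *\<^sub>v X =
        (- \<i>) \<cdot>\<^sub>v (Mh N *\<^sub>v shadow k N Y)
        - (complex_of_real (k / hstep N) * (Y $ N)) \<cdot>\<^sub>v eN N)"

definition cinner :: "complex vec \<Rightarrow> complex vec \<Rightarrow> complex" where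
  "cinner u v = (\<Sum>j<dim_vec u. u $ j * cnj (v $ j))"

definition inner_Yh :: "nat \<Rightarrow> complex vec \<Rightarrow> complex vec \<Rightarrow> complex" where
  "inner_Yh N Y Y' = complex_of_real (hstep N) * cinner (Dh N *\<^sub>v Y) (Dh N *\<^sub>v Y')"

end

theory Submission
  imports Defs "Jordan_Normal_Form.Determinant"
begin

(* Both D_h and M_h^T are real lower bidiagonal matrices a I + b S (S the lower shift), so they
   commute with each other and with complex conjugation. Pair D_h A_h Y = -i M_h Z - (k/h) y e
   with D_h Y, move M_h across as M_h^T, past D_h, and back across as D_h^T: the M_h Z term
   becomes the defining equation of the shadow element Z, and the result is i |M_h^T Y|^2 plus
   boundary terms at the last index. The first is purely imaginary; the boundary terms add up
   to -(k/h) |y_(N+1)|^2, which the weight h of the inner product turns into -k |y_(N+1)|^2. *)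

definition lower_bidiag_mat :: "nat \<Rightarrow> 'a :: zero \<Rightarrow> 'a \<Rightarrow> 'a mat" where
  "lower_bidiag_mat n a b = mat n n (\<lambda>(i, j). if i = j then a else if i = Suc j then b else 0)"

lemma lower_bidiag_mat_carrier [simp]: "lower_bidiag_mat n a b \<in> carrier_mat n n"
  and dim_row_lower_bidiag_mat [simp]: "dim_row (lower_bidiag_mat n a b) = n"
  and dim_col_lower_bidiag_mat [simp]: "dim_col (lower_bidiag_mat n a b) = n"
  by (simp_all add: lower_bidiag_mat_def)

lemma index_lower_bidiag_mult_vec:
  fixes a b :: "'a :: semiring_0"
  assumes v: "v \<in> carrier_vec n" and i: "i < n"
  shows "(lower_bidiag_mat n a b *\<^sub>v v) $ i = a * v $ i + (if i = 0 then 0 else b * v $ (i - 1))"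
proof -
  have "(lower_bidiag_mat n a b *\<^sub>v v) $ i
      = (\<Sum>j<n. (if j = i then a * v $ i else 0) + (if Suc j = i then b * v $ j else 0))"
    using v i by (auto simp: lower_bidiag_mat_def scalar_prod_def atLeast0LessThan intro!: sum.cong)
  also have "\<dots> = a * v $ i + (if i = 0 then 0 else b * v $ (i - 1))"
    using i by (cases i) (auto simp: sum.distrib)
  finally show ?thesis .
qed

lemma index_lower_bidiag_mult_vec_twice:
  fixes a b c d :: "'a :: comm_semiring_0"
  assumes v: "v \<in> carrier_vec n" and i: "i < n"
  shows "(lower_bidiag_mat n a b *\<^sub>v (lower_bidiag_mat n c d *\<^sub>v v)) $ i
       = a * c * v $ i + (if i = 0 then 0 else (a * d + b * c) * v $ (i - 1))
         + (if i \<le> 1 then 0 else b * d * v $ (i - 2))"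
proof -
  have cv: "lower_bidiag_mat n c d *\<^sub>v v \<in> carrier_vec n"
    using v by (rule mult_mat_vec_carrier[OF lower_bidiag_mat_carrier])
  have "(lower_bidiag_mat n a b *\<^sub>v (lower_bidiag_mat n c d *\<^sub>v v)) $ i
     = a * (lower_bidiag_mat n c d *\<^sub>v v) $ i
       + (if i = 0 then 0 else b * (lower_bidiag_mat n c d *\<^sub>v v) $ (i - 1))"
    by (rule index_lower_bidiag_mult_vec[OF cv i])
  also have "\<dots> = a * c * v $ i + (if i = 0 then 0 else (a * d + b * c) * v $ (i - 1))
         + (if i \<le> 1 then 0 else b * d * v $ (i - 2))"
    using i by (cases i) (simp_all add: index_lower_bidiag_mult_vec[OF v] distrib_left
        distrib_right mult.assoc add.assoc numeral_2_eq_2 del: index_mult_mat_vec)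
  finally show ?thesis .
qed

lemma lower_bidiag_mult_vec_commute:
  fixes a b c d :: "'a :: comm_semiring_0"
  assumes v: "v \<in> carrier_vec n"
  shows "lower_bidiag_mat n a b *\<^sub>v (lower_bidiag_mat n c d *\<^sub>v v)
       = lower_bidiag_mat n c d *\<^sub>v (lower_bidiag_mat n a b *\<^sub>v v)"
  by (rule eq_vecI)
    (simp_all add: index_lower_bidiag_mult_vec_twice[OF v] ac_simps del: index_mult_mat_vec)

lemma conjugate_lower_bidiag_mult_vec:
  fixes a b :: "'a :: conjugatable_ring"
  assumes v: "v \<in> carrier_vec n"
  shows "conjugate (lower_bidiag_mat n a b *\<^sub>v v)
       = lower_bidiag_mat n (conjugate a) (conjugate b) *\<^sub>v conjugate v"
  by (rule eq_vecI)
    (use v in \<open>auto simp: index_lower_bidiag_mult_vec conjugate_dist_add conjugate_dist_mul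
      simp del: index_mult_mat_vec\<close>)

lemma det_lower_bidiag_mat: "det (lower_bidiag_mat n a b) = a ^ n"
proof -
  have "det (lower_bidiag_mat n a b) = prod_list (diag_mat (lower_bidiag_mat n a b))"
    by (rule det_lower_triangular[of n]) (auto simp: lower_bidiag_mat_def)
  also have "diag_mat (lower_bidiag_mat n a b) = replicate n a"
    by (rule nth_equalityI) (auto simp: diag_mat_def lower_bidiag_mat_def)
  finally show ?thesis by simp
qed

lemma the_solution_mult_mat_vec:
  fixes A :: "'a :: field mat"
  assumes A: "A \<in> carrier_mat n n" and det: "det A \<noteq> 0" and b: "b \<in> carrier_vec n"
  shows "(THE x. x \<in> carrier_vec n \<and> A *\<^sub>v x = b) \<in> carrier_vec n"
    and "A *\<^sub>v (THE x. x \<in> carrier_vec n \<and> A *\<^sub>v x = b) = b"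
proof -
  obtain B where BA: "B * A = 1\<^sub>m n" and AB: "A * B = 1\<^sub>m n" and B: "B \<in> carrier_mat n n"
    using det_non_zero_imp_unit[OF A det, of "()"] unfolding Units_def ring_mat_def by auto
  have "\<exists>!x. x \<in> carrier_vec n \<and> A *\<^sub>v x = b"
  proof
    show "B *\<^sub>v b \<in> carrier_vec n \<and> A *\<^sub>v (B *\<^sub>v b) = b"
      using A B b AB by (simp add: assoc_mult_mat_vec[symmetric])
  next
    fix x assume x: "x \<in> carrier_vec n \<and> A *\<^sub>v x = b"
    then have "x = (B * A) *\<^sub>v x" using BA by simp
    also have "\<dots> = B *\<^sub>v b" using x A B by simp
    finally show "x = B *\<^sub>v b" .
  qed
  from theI'[OF this] show "(THE x. x \<in> carrier_vec n \<and> A *\<^sub>v x = b) \<in> carrier_vec n"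
    and "A *\<^sub>v (THE x. x \<in> carrier_vec n \<and> A *\<^sub>v x = b) = b" by auto
qed

lemma cscalar_prod_shadow_identity:
  fixes D M :: "'a :: {conjugatable_ring, comm_ring} mat"
  assumes D: "D \<in> carrier_mat n n" and M: "M \<in> carrier_mat n n"
    and Y: "Y \<in> carrier_vec n" and Z: "Z \<in> carrier_vec n" and e: "e \<in> carrier_vec n"
    and conj_D: "conjugate (D *\<^sub>v Y) = D *\<^sub>v conjugate Y"
    and conj_M: "conjugate (transpose_mat M *\<^sub>v Y) = transpose_mat M *\<^sub>v conjugate Y"
    and commute: "transpose_mat M *\<^sub>v (D *\<^sub>v conjugate Y) = D *\<^sub>v (transpose_mat M *\<^sub>v conjugate Y)"
    and shadow: "transpose_mat D *\<^sub>v Z = - (transpose_mat M *\<^sub>v Y) + \<beta> \<cdot>\<^sub>v e"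
    and solution: "D *\<^sub>v X = s \<cdot>\<^sub>v (M *\<^sub>v Z) - \<alpha> \<cdot>\<^sub>v e"
  shows "(D *\<^sub>v X) \<bullet>c (D *\<^sub>v Y)
       = s * (\<beta> * (e \<bullet>c (transpose_mat M *\<^sub>v Y))
              - (transpose_mat M *\<^sub>v Y) \<bullet>c (transpose_mat M *\<^sub>v Y))
         - \<alpha> * (e \<bullet>c (D *\<^sub>v Y))"
proof -
  define W where "W = transpose_mat M *\<^sub>v Y"
  define U where "U = conjugate (D *\<^sub>v Y)"
  have W: "W \<in> carrier_vec n" and cW: "conjugate W \<in> carrier_vec n"
    and U: "U \<in> carrier_vec n" and MZ: "M *\<^sub>v Z \<in> carrier_vec n"
    and DcW: "D *\<^sub>v conjugate W \<in> carrier_vec n"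
    using D M Y Z by (auto simp: W_def U_def)
  have "transpose_mat M *\<^sub>v U = D *\<^sub>v conjugate W"
    unfolding U_def W_def conj_D conj_M by (rule commute)
  then have "(M *\<^sub>v Z) \<bullet> U = (transpose_mat D *\<^sub>v Z) \<bullet> conjugate W"
    using transpose_vec_mult_scalar[OF M Z U] transpose_vec_mult_scalar[OF D cW Z]
      comm_scalar_prod[OF MZ U] comm_scalar_prod[OF DcW Z] by simp
  also have "\<dots> = \<beta> * (e \<bullet>c W) - W \<bullet>c W"
    unfolding shadow W_def[symmetric] using W cW e
    by (simp add: add_scalar_prod_distrib[of _ n])
  finally have "(M *\<^sub>v Z) \<bullet> U = \<beta> * (e \<bullet>c W) - W \<bullet>c W" .
  then show ?thesis
    unfolding solution U_def[symmetric] W_def[symmetric] using MZ U e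
    by (simp add: minus_scalar_prod_distrib[of _ n])
qed

lemma Im_cscalar_prod_self: "Im (w \<bullet>c w) = 0"
  using conjugate_square_ge_0_vec[of w] by (simp add: less_eq_complex_def)

lemma Dh_eq_lower_bidiag_mat: "Dh N = lower_bidiag_mat (N + 1) (1 / 2) (1 / 2)"
  by (rule eq_matI) (auto simp: Dh_def lower_bidiag_mat_def)

lemma divide_hstep: "x / hstep N = x * (real N + 1)"
  by (simp add: hstep_def)

lemma transpose_Mh_eq_lower_bidiag_mat:
  "transpose_mat (Mh N) = lower_bidiag_mat (N + 1) (- of_real (real N + 1)) (of_real (real N + 1))"
  by (rule eq_matI) (auto simp: Mh_def lower_bidiag_mat_def divide_hstep)

lemma Dh_carrier: "Dh N \<in> carrier_mat (N + 1) (N + 1)"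
  and Mh_carrier: "Mh N \<in> carrier_mat (N + 1) (N + 1)"
  and eN_carrier: "eN N \<in> carrier_vec (N + 1)"
  by (simp_all add: Dh_def Mh_def eN_def)

lemma det_Dh_neq_0: "det (Dh N) \<noteq> 0"
  by (simp add: Dh_eq_lower_bidiag_mat det_lower_bidiag_mat)

lemma det_transpose_Dh_neq_0: "det (transpose_mat (Dh N)) \<noteq> 0"
  using det_Dh_neq_0 by (simp add: det_transpose[OF Dh_carrier])

lemma shadow_solves:
  assumes "Y \<in> carrier_vec (N + 1)"
  shows "shadow k N Y \<in> carrier_vec (N + 1)"
    and "transpose_mat (Dh N) *\<^sub>v shadow k N Y
       = - (transpose_mat (Mh N) *\<^sub>v Y) + (\<i> * complex_of_real k / 2 * Y $ N) \<cdot>\<^sub>v eN N"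
  using assms Dh_carrier[of N] Mh_carrier[of N] eN_carrier[of N] unfolding shadow_def
  by (auto intro!: the_solution_mult_mat_vec det_transpose_Dh_neq_0)

lemma Ah_solves:
  assumes "Y \<in> carrier_vec (N + 1)"
  shows "Ah k N Y \<in> carrier_vec (N + 1)"
    and "Dh N *\<^sub>v Ah k N Y
       = (- \<i>) \<cdot>\<^sub>v (Mh N *\<^sub>v shadow k N Y) - (complex_of_real (k / hstep N) * Y $ N) \<cdot>\<^sub>v eN N"
  using shadow_solves(1)[OF assms] Dh_carrier[of N] Mh_carrier[of N] eN_carrier[of N]
  unfolding Ah_def
  by (auto intro!: the_solution_mult_mat_vec det_Dh_neq_0)

lemma cinner_eq_cscalar_prod: "dim_vec u = dim_vec v \<Longrightarrow> cinner u v = u \<bullet>c v"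
  by (simp add: cinner_def scalar_prod_def atLeast0LessThan)

lemma eN_cscalar_prod: "w \<in> carrier_vec (N + 1) \<Longrightarrow> eN N \<bullet>c w = cnj (w $ N)"
  by (simp add: scalar_prod_def eN_def sum.delta' cong: if_cong)

lemma boundary_term_Dh_Mh:
  assumes Y: "Y \<in> carrier_vec (N + 1)"
  defines "W \<equiv> transpose_mat (Mh N) *\<^sub>v Y"
  shows "- \<i> * (\<i> * complex_of_real k / 2 * Y $ N * cnj (W $ N))
         - complex_of_real (k / hstep N) * Y $ N * cnj ((Dh N *\<^sub>v Y) $ N)
       = - complex_of_real (k * (real N + 1)) * (Y $ N * cnj (Y $ N))"
proof -
  let ?c = "complex_of_real (real N + 1)"
  have N: "N < N + 1" by simp
  have W_N: "W $ N = - ?c * Y $ N + (if N = 0 then 0 else ?c * Y $ (N - 1))"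
    unfolding W_def transpose_Mh_eq_lower_bidiag_mat index_lower_bidiag_mult_vec[OF Y N] by simp
  have DY_N: "(Dh N *\<^sub>v Y) $ N = Y $ N / 2 + (if N = 0 then 0 else Y $ (N - 1) / 2)"
    unfolding Dh_eq_lower_bidiag_mat index_lower_bidiag_mult_vec[OF Y N] by simp
  show ?thesis
    unfolding W_N DY_N divide_hstep by (cases "N = 0") (simp_all add: field_simps)
qed

lemma cscalar_prod_Dh_Ah:
  assumes Y: "Y \<in> carrier_vec (N + 1)"
  defines "W \<equiv> transpose_mat (Mh N) *\<^sub>v Y"
  shows "(Dh N *\<^sub>v Ah k N Y) \<bullet>c (Dh N *\<^sub>v Y)
       = \<i> * (W \<bullet>c W) - complex_of_real (k * (real N + 1)) * (Y $ N * cnj (Y $ N))"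
proof -
  have W: "W \<in> carrier_vec (N + 1)" and DY: "Dh N *\<^sub>v Y \<in> carrier_vec (N + 1)"
    using Mh_carrier[of N] Dh_carrier[of N] Y by (simp_all add: W_def)
  have conj_D: "conjugate (Dh N *\<^sub>v Y) = Dh N *\<^sub>v conjugate Y"
    unfolding Dh_eq_lower_bidiag_mat using conjugate_lower_bidiag_mult_vec[OF Y] by simp
  have conj_M: "conjugate (transpose_mat (Mh N) *\<^sub>v Y) = transpose_mat (Mh N) *\<^sub>v conjugate Y"
    unfolding transpose_Mh_eq_lower_bidiag_mat using conjugate_lower_bidiag_mult_vec[OF Y] by simp
  have commute: "transpose_mat (Mh N) *\<^sub>v (Dh N *\<^sub>v conjugate Y)
               = Dh N *\<^sub>v (transpose_mat (Mh N) *\<^sub>v conjugate Y)"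
    unfolding Dh_eq_lower_bidiag_mat transpose_Mh_eq_lower_bidiag_mat
    using Y by (simp add: lower_bidiag_mult_vec_commute)
  have "(Dh N *\<^sub>v Ah k N Y) \<bullet>c (Dh N *\<^sub>v Y)
      = - \<i> * (\<i> * complex_of_real k / 2 * Y $ N * cnj (W $ N) - W \<bullet>c W)
        - complex_of_real (k / hstep N) * Y $ N * cnj ((Dh N *\<^sub>v Y) $ N)"
    using cscalar_prod_shadow_identity[OF Dh_carrier Mh_carrier Y shadow_solves(1)[OF Y] eN_carrier
        conj_D conj_M commute shadow_solves(2)[OF Y] Ah_solves(2)[OF Y]]
    unfolding W_def[symmetric] eN_cscalar_prod[OF W] eN_cscalar_prod[OF DY] by (simp add: mult.assoc)
  also have "\<dots> = \<i> * (W \<bullet>c W)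
      + (- \<i> * (\<i> * complex_of_real k / 2 * Y $ N * cnj (W $ N))
         - complex_of_real (k / hstep N) * Y $ N * cnj ((Dh N *\<^sub>v Y) $ N))"
    by (simp add: algebra_simps)
  also have "\<dots> = \<i> * (W \<bullet>c W) - complex_of_real (k * (real N + 1)) * (Y $ N * cnj (Y $ N))"
    unfolding boundary_term_Dh_Mh[OF Y, folded W_def] by simp
  finally show ?thesis .
qed

theorem lemma2:
  fixes k :: real and N :: nat and Y :: "complex vec"
  assumes "k > 0" and "N \<ge> 1" and "Y \<in> carrier_vec (N+1)"
  shows "Re (inner_Yh N (Ah k N Y) Y) = - k * (cmod (Y $ N))\<^sup>2"
proof -
  note Y = assms(3)
  define W where "W = transpose_mat (Mh N) *\<^sub>v Y"
  have "inner_Yh N (Ah k N Y) Y = of_real (hstep N) * ((Dh N *\<^sub>v Ah k N Y) \<bullet>c (Dh N *\<^sub>v Y))"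
    unfolding inner_Yh_def using Ah_solves(1)[OF Y] Y Dh_carrier[of N]
    by (simp add: cinner_eq_cscalar_prod)
  also have "\<dots> = of_real (hstep N)
      * (\<i> * (W \<bullet>c W) - of_real (k * (real N + 1)) * of_real ((cmod (Y $ N))\<^sup>2))"
    unfolding cscalar_prod_Dh_Ah[OF Y] W_def complex_norm_square ..
  finally have "Re (inner_Yh N (Ah k N Y) Y) = - k * (hstep N * (real N + 1)) * (cmod (Y $ N))\<^sup>2"
    by (simp add: Im_cscalar_prod_self)
  then show ?thesis
    by (simp add: hstep_def)
qed

end
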